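(* Let $K$ be as in the context, $\mathbf{p_0},\mathbf{p_1}\in(0,1)^N$ with $p_1(i)\ge p_0(i)$ for all $i$ and $\mu\cdot\mathbf{p_1}>\mu\cdot\mathbf{p_0}=1/2$, and let $\eta$ be an arbitrary distribution on $\mathcal R$. For $\varepsilon\in(0,1]$ let $\hat\delta_\varepsilon=\delta(\hat{\mathbf p},\hat K_\varepsilon,\hat\eta_\varepsilon)$. Then $$\hat\delta_\varepsilon=\delta(\mathbf{p_0},K,\eta)+\frac{4\,\eta\cdot\Big(\sum_{j=1}^\infty(1-\varepsilon)^jK^{j-1}(\mathbf{p_1}-\mathbf{p_0})\Big)}{\nu(\mathbf{p_0},K)}.$$ In particular, $\varepsilon\mapsto\hat\delta_\varepsilon$ is a continuous strictly decreasing function on $(0,1]$ which equals $\delta(\mathbf{p_0},K,\eta)$ at $\varepsilon=1$, and $\lim_{\varepsilon\downarrow0}\hat\delta_\varepsilon=\infty$.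
   Context: Let $\mathcal R=\{1,\dots,N\}$ and let $K$ be a stochastic matrix on $\mathcal R$ whose Markov chain has a unique closed irreducible subset $\mathcal R_0$ and unique stationary distribution $\mu$ (row vector). For a stochastic matrix $Q$ on a finite set having a unique closed irreducible subset with stationary distribution $m$, a vector $\mathbf q$ with entries in $(0,1)$ satisfying $m\cdot\mathbf q=1/2$, and a distribution $\zeta$, define $\mathbf r(\mathbf q,Q)=(I-Q+2(\mathbf 1-\mathbf q)\,m\,D_{1-q}Q)^{-1}\mathbf q-\mathbf 1$, $\nu(\mathbf q,Q)=2+4\,m\,D_qQ\,\mathbf r(\mathbf q,Q)$ and $\delta(\mathbf q,Q,\zeta)=2\,\zeta\cdot\mathbf r(\mathbf q,Q)/\nu(\mathbf q,Q)$, where $\mathbf 1$ is the all-ones column vector, $D_q$ is diagonal with entries $q(i)$, $D_{1-q}=I-D_q$. On $\{1,\dots,2N\}$ define the $2N\times2N$ block matrix $\hat K_\varepsilon=\begin{pmatrix}(1-\varepsilon)K&\varepsilon K\\ O_N&K\end{pmatrix}$ ($O_N$ the $N\times N$ zero matrix), the column vector $\hat{\mathbf p}=\begin{pmatrix}\mathbf{p_1}\\ \mathbf{p_0}\end{pmatrix}$, and the distribution $\hat\eta_\varepsilon=((1-\varepsilon)\eta,\varepsilon\eta)$. The stationary distribution of $\hat K_\varepsilon$ is $(\mathbf 0,\mu)$, so $\hat{\mathbf p}$ is critical for $\hat K_\varepsilon$. *)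

theory Defs
  imports "HOL-Analysis.Analysis" "Jordan_Normal_Form.Matrix"
begin

(* Real N x N matrices and vectors of length N are Jordan_Normal_Form's "real mat" / "real vec",
   states indexed 0..N-1.  Row vectors (distributions) are also "real vec"; the row-vector/matrix
   product m Q is written row_mult m Q = Q^T m. *)

definition row_mult :: "real vec \<Rightarrow> real mat \<Rightarrow> real vec" where
  "row_mult m Q = transpose_mat Q *\<^sub>v m"

definition ones_vec :: "nat \<Rightarrow> real vec" where
  "ones_vec n = vec n (\<lambda>_. 1)"

definition diag_vec :: "real vec \<Rightarrow> real mat" where
  "diag_vec q = mat_diag (dim_vec q) (\<lambda>i. q $ i)"

definition outer_prod :: "real vec \<Rightarrow> real vec \<Rightarrow> real mat" where
  "outer_prod u w = mat (dim_vec u) (dim_vec w) (\<lambda>(i,j). u $ i * w $ j)"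

definition mat_inv :: "real mat \<Rightarrow> real mat" where
  "mat_inv A = (THE B. B \<in> carrier_mat (dim_row A) (dim_row A) \<and>
       A * B = 1\<^sub>m (dim_row A) \<and> B * A = 1\<^sub>m (dim_row A))"

definition stochastic_mat :: "real mat \<Rightarrow> bool" where
  "stochastic_mat Q \<longleftrightarrow> Q \<in> carrier_mat (dim_row Q) (dim_row Q) \<and>
     (\<forall>i < dim_row Q. \<forall>j < dim_row Q. Q $$ (i,j) \<ge> 0) \<and>
     (\<forall>i < dim_row Q. (\<Sum>j < dim_row Q. Q $$ (i,j)) = 1)"

definition trans_rel :: "real mat \<Rightarrow> (nat \<times> nat) set" where
  "trans_rel Q = {(i,j). i < dim_row Q \<and> j < dim_row Q \<and> Q $$ (i,j) > 0}"

definition closed_irreducible :: "real mat \<Rightarrow> nat set \<Rightarrow> bool" where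
  "closed_irreducible Q C \<longleftrightarrow> C \<noteq> {} \<and> C \<subseteq> {..<dim_row Q} \<and>
     (\<forall>i\<in>C. \<forall>j < dim_row Q. Q $$ (i,j) > 0 \<longrightarrow> j \<in> C) \<and>
     (\<forall>i\<in>C. \<forall>j\<in>C. (i,j) \<in> (trans_rel Q)\<^sup>*)"

definition is_distribution :: "nat \<Rightarrow> real vec \<Rightarrow> bool" where
  "is_distribution n m \<longleftrightarrow> dim_vec m = n \<and> (\<forall>i<n. m $ i \<ge> 0) \<and> (\<Sum>i<n. m $ i) = 1"

definition stationary :: "real mat \<Rightarrow> real vec \<Rightarrow> bool" where
  "stationary Q m \<longleftrightarrow> is_distribution (dim_row Q) m \<and> row_mult m Q = m"

definition stat_dist :: "real mat \<Rightarrow> real vec" where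
  "stat_dist Q = (THE m. stationary Q m)"

definition r_vec :: "real vec \<Rightarrow> real mat \<Rightarrow> real vec" where
  "r_vec q Q = (let n = dim_row Q; m = stat_dist Q; q1 = ones_vec n - q in
     mat_inv (1\<^sub>m n - Q + outer_prod (2 \<cdot>\<^sub>v q1) (row_mult m (diag_vec q1 * Q))) *\<^sub>v q
     - ones_vec n)"

definition nu :: "real vec \<Rightarrow> real mat \<Rightarrow> real" where
  "nu q Q = 2 + 4 * (row_mult (stat_dist Q) (diag_vec q * Q) \<bullet> r_vec q Q)"

definition delta :: "real vec \<Rightarrow> real mat \<Rightarrow> real vec \<Rightarrow> real" where
  "delta q Q \<zeta> = 2 * (\<zeta> \<bullet> r_vec q Q) / nu q Q"

definition hatK :: "real mat \<Rightarrow> real \<Rightarrow> real mat" where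
  "hatK K \<epsilon> = four_block_mat ((1 - \<epsilon>) \<cdot>\<^sub>m K) (\<epsilon> \<cdot>\<^sub>m K) (0\<^sub>m (dim_row K) (dim_row K)) K"

definition hatp :: "real vec \<Rightarrow> real vec \<Rightarrow> real vec" where
  "hatp p1 p0 = p1 @\<^sub>v p0"

definition hateta :: "real vec \<Rightarrow> real \<Rightarrow> real vec" where
  "hateta \<eta> \<epsilon> = ((1 - \<epsilon>) \<cdot>\<^sub>v \<eta>) @\<^sub>v (\<epsilon> \<cdot>\<^sub>v \<eta>)"

end

theory Submission
  imports Defs "Jordan_Normal_Form.Determinant"
begin

(* Write r0 = r(p0, K) and T c = \<Sum>_j c^j K^j (p1 - p0) for the resolvent of K.  The vector r(q, Q)
   is the unique solution of  r - Q r = 2q - 1  normalised by  m D_(1-q) Q r = 0,  where m is the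
   stationary distribution of Q.  For the two-block chain K_\<epsilon> the stationary distribution is (0, \<mu>),
   and (r0 + 2 T(1-\<epsilon>), r0) solves the system for (p1, p0); hence \<nu> is unchanged and
   \<delta>_\<epsilon> = \<delta>(p0, K, \<eta>) + 4 (1-\<epsilon>) \<eta>\<cdot>T(1-\<epsilon>) / \<nu>(p0, K).
   As c \<eta>\<cdot>T c is a power series in c with nonnegative coefficients \<eta>\<cdot>K^j (p1 - p0), not all
   zero, \<delta>_\<epsilon> is continuous and strictly decreasing.  Comparing T c with a solution g of the Poisson
   equation  g - K g = p1 - p0 - \<mu>\<cdot>(p1 - p0)  gives  T c \<ge> \<mu>\<cdot>(p1 - p0)/(1 - c) - G,  and
   \<mu>\<cdot>(p1 - p0) > 0 makes \<delta>_\<epsilon> blow up as \<epsilon> \<rightarrow> 0. *)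

unbundle no vec_syntax

lemma mult_mat_vec_index_sum:
  assumes "A \<in> carrier_mat n n" "x \<in> carrier_vec n" "i < n"
  shows "(A *\<^sub>v x) $ i = (\<Sum>j<n. A $$ (i,j) * x $ j)"
  using assms by (auto simp: index_mult_mat_vec scalar_prod_def atLeast0LessThan intro!: sum.cong)

lemma row_mult_index:
  assumes "A \<in> carrier_mat n n" "m \<in> carrier_vec n" "j < n"
  shows "row_mult m A $ j = (\<Sum>k<n. A $$ (k,j) * m $ k)"
  using assms unfolding row_mult_def
  by (auto simp: index_mult_mat_vec scalar_prod_def atLeast0LessThan intro!: sum.cong)

declare index_mult_mat_vec[simp del]

lemma dim_row_mult[simp]: "dim_vec (row_mult m A) = dim_col A"
  unfolding row_mult_def by simp

lemma scalar_prod_lessThan: "w \<in> carrier_vec n \<Longrightarrow> v \<bullet> w = (\<Sum>k<n. v $ k * w $ k)"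
  by (auto simp: scalar_prod_def atLeast0LessThan)

lemma ones_vec_index[simp]: "i < n \<Longrightarrow> ones_vec n $ i = 1"
  and ones_vec_dim[simp]: "dim_vec (ones_vec n) = n"
  and ones_vec_carrier[simp]: "ones_vec n \<in> carrier_vec n"
  by (auto simp: ones_vec_def)

lemma distribution_carrier: "is_distribution n m \<Longrightarrow> m \<in> carrier_vec n"
  unfolding is_distribution_def carrier_vec_def by auto

lemma sum_lessThan_add: "(\<Sum>j<m+n. f j) = (\<Sum>j<m. f j) + (\<Sum>j<n. f (m+j::nat))"
  by (induction n) (simp_all add: add.assoc)

lemma all_lessThan_add: "(\<forall>i<m+n. P i) \<longleftrightarrow> (\<forall>i<m. P i) \<and> (\<forall>i<n. P (m+i::nat))"
  by (auto, metis add_diff_inverse_nat nat_add_left_cancel_less)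

lemma stationary_unique_stat_dist:
  assumes "stationary Q m" "\<And>m'. stationary Q m' \<Longrightarrow> m' = m"
  shows "stat_dist Q = m"
  unfolding stat_dist_def using assms by (rule the_equality)

section \<open>Stochastic matrices\<close>

locale stochastic_matrix =
  fixes n :: nat and Q :: "real mat"
  assumes carrier: "Q \<in> carrier_mat n n"
    and nonneg: "\<And>i j. i < n \<Longrightarrow> j < n \<Longrightarrow> Q $$ (i,j) \<ge> 0"
    and row_sum: "\<And>i. i < n \<Longrightarrow> (\<Sum>j<n. Q $$ (i,j)) = 1"
begin

lemma dim[simp]: "dim_row Q = n" "dim_col Q = n"
  using carrier by auto

lemma mult_vec_index: "x \<in> carrier_vec n \<Longrightarrow> i < n \<Longrightarrow> (Q *\<^sub>v x) $ i = (\<Sum>j<n. Q $$ (i,j) * x $ j)"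
  using mult_mat_vec_index_sum[OF carrier] by blast

lemma mult_vec_const: "i < n \<Longrightarrow> (\<Sum>j<n. Q $$ (i,j) * c) = c"
  using row_sum by (simp add: sum_distrib_right[symmetric])

lemma mult_vec_le:
  assumes "x \<in> carrier_vec n" "\<And>j. j < n \<Longrightarrow> x $ j \<le> B" "i < n"
  shows "(Q *\<^sub>v x) $ i \<le> B"
proof -
  have "(Q *\<^sub>v x) $ i \<le> (\<Sum>j<n. Q $$ (i,j) * B)"
    unfolding mult_vec_index[OF assms(1,3)] by (rule sum_mono) (simp add: assms nonneg mult_left_mono)
  thus ?thesis using mult_vec_const[OF assms(3)] by simp
qed

lemma mult_vec_ge:
  assumes "x \<in> carrier_vec n" "\<And>j. j < n \<Longrightarrow> B \<le> x $ j" "i < n"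
  shows "B \<le> (Q *\<^sub>v x) $ i"
proof -
  have "(\<Sum>j<n. Q $$ (i,j) * B) \<le> (Q *\<^sub>v x) $ i"
    unfolding mult_vec_index[OF assms(1,3)] by (rule sum_mono) (simp add: assms nonneg mult_left_mono)
  thus ?thesis using mult_vec_const[OF assms(3)] by simp
qed

lemma mult_vec_abs_le:
  assumes "x \<in> carrier_vec n" "\<And>j. j < n \<Longrightarrow> \<bar>x $ j\<bar> \<le> B" "i < n"
  shows "\<bar>(Q *\<^sub>v x) $ i\<bar> \<le> B"
  using mult_vec_le[OF assms(1) _ assms(3), of B] mult_vec_ge[OF assms(1) _ assms(3), of "-B"] assms(2)
  by (simp add: abs_le_iff) (meson abs_le_D1 abs_le_D2 minus_le_iff)

lemma mult_vec_add: "x \<in> carrier_vec n \<Longrightarrow> y \<in> carrier_vec n \<Longrightarrow> i < n \<Longrightarrow>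
    (Q *\<^sub>v (x + y)) $ i = (Q *\<^sub>v x) $ i + (Q *\<^sub>v y) $ i"
  by (simp add: mult_vec_index sum.distrib algebra_simps)

lemma mult_vec_diff: "x \<in> carrier_vec n \<Longrightarrow> y \<in> carrier_vec n \<Longrightarrow> i < n \<Longrightarrow>
    (Q *\<^sub>v (x - y)) $ i = (Q *\<^sub>v x) $ i - (Q *\<^sub>v y) $ i"
  by (simp add: mult_vec_index sum_subtractf algebra_simps)

lemma mult_vec_smult: "x \<in> carrier_vec n \<Longrightarrow> i < n \<Longrightarrow>
    (Q *\<^sub>v (c \<cdot>\<^sub>v x)) $ i = c * (Q *\<^sub>v x) $ i"
  by (simp add: mult_vec_index sum_distrib_left algebra_simps)

lemma mult_vec_ones: "i < n \<Longrightarrow> (Q *\<^sub>v ones_vec n) $ i = 1"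
  using mult_vec_index[of "ones_vec n" i] row_sum by simp

lemma harmonic_argmax_step:
  assumes x: "x \<in> carrier_vec n" and h: "Q *\<^sub>v x = x" and i: "i < n" and j: "j < n"
    and le: "\<And>k. k < n \<Longrightarrow> x $ k \<le> x $ i" and pos: "Q $$ (i,j) > 0"
  shows "x $ j = x $ i"
proof -
  have "(\<Sum>k<n. Q $$ (i,k) * (x $ i - x $ k)) = x $ i - (Q *\<^sub>v x) $ i"
    using mult_vec_const[OF i, of "x $ i"] mult_vec_index[OF x i]
    by (simp add: right_diff_distrib sum_subtractf)
  also have "\<dots> = 0" using h by simp
  finally have "\<forall>k\<in>{..<n}. Q $$ (i,k) * (x $ i - x $ k) = 0"
    using sum_nonneg_eq_0_iff[of "{..<n}" "\<lambda>k. Q $$ (i,k) * (x $ i - x $ k)"] nonneg i le by simp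
  hence "Q $$ (i,j) = 0 \<or> x $ i = x $ j" using j by simp
  thus ?thesis using pos by auto
qed

lemma reachable_stays_in_closed:
  assumes "\<And>i j. i \<in> S \<Longrightarrow> j < n \<Longrightarrow> Q $$ (i,j) > 0 \<Longrightarrow> j \<in> S"
    and "(i,j) \<in> (trans_rel Q)\<^sup>*" and "i \<in> S"
  shows "j \<in> S"
  using assms(2,3) by (induction rule: rtrancl_induct) (auto simp: trans_rel_def assms(1))

(* The states reachable from a state whose reachable set has minimal cardinality. *)
lemma closed_set_contains_class:
  assumes S: "S \<subseteq> {..<n}" "S \<noteq> {}"
    and closed: "\<And>i j. i \<in> S \<Longrightarrow> j < n \<Longrightarrow> Q $$ (i,j) > 0 \<Longrightarrow> j \<in> S"
  shows "\<exists>C\<subseteq>S. closed_irreducible Q C"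
proof -
  define R where "R i = {j. (i,j) \<in> (trans_rel Q)\<^sup>*}" for i
  have RS: "R i \<subseteq> S" if "i \<in> S" for i
  proof
    fix j assume "j \<in> R i"
    thus "j \<in> S" unfolding R_def using reachable_stays_in_closed[OF closed _ that] by simp
  qed
  have fin: "finite (R i)" if "i \<in> S" for i
    using RS[OF that] S(1) finite_subset[of "R i" "{..<n}"] by blast
  obtain i0 where i0: "i0 \<in> S" and min: "\<And>j. j \<in> S \<Longrightarrow> card (R i0) \<le> card (R j)"
    using ex_has_least_nat[of "\<lambda>i. i \<in> S" _ "\<lambda>i. card (R i)"] S(2) by blast
  have "closed_irreducible Q (R i0)"
    unfolding closed_irreducible_def
  proof (intro conjI ballI allI impI)
    show "R i0 \<noteq> {}" unfolding R_def by blast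
    show "R i0 \<subseteq> {..<dim_row Q}" using RS[OF i0] S(1) by auto
  next
    fix i j assume iR: "i \<in> R i0" and j: "j < dim_row Q" and p: "Q $$ (i,j) > 0"
    have "i < n" using RS[OF i0] iR S(1) by auto
    hence "(i,j) \<in> trans_rel Q" using j p by (simp add: trans_rel_def)
    thus "j \<in> R i0" using iR unfolding R_def by (simp add: rtrancl_into_rtrancl)
  next
    fix i j assume iR: "i \<in> R i0" and jR: "j \<in> R i0"
    have sub: "R i \<subseteq> R i0" using iR unfolding R_def by (auto intro: rtrancl_trans)
    have "card (R i0) \<le> card (R i)" using min RS[OF i0] iR by blast
    hence "R i = R i0" using card_subset_eq[OF fin[OF i0] sub] card_mono[OF fin[OF i0] sub] by linarith
    thus "(i,j) \<in> (trans_rel Q)\<^sup>*" using jR unfolding R_def by blast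
  qed
  thus ?thesis using RS[OF i0] by blast
qed

lemma harmonic_max_on_class:
  assumes C: "closed_irreducible Q C" "\<And>C'. closed_irreducible Q C' \<Longrightarrow> C' = C"
    and x: "x \<in> carrier_vec n" and h: "Q *\<^sub>v x = x" and i: "i \<in> C" and k: "k < n"
  shows "x $ k \<le> x $ i"
proof -
  have "n > 0" using k by simp
  define M where "M = Max ((\<lambda>k. x $ k) ` {..<n})"
  have le: "x $ k \<le> M" if "k < n" for k unfolding M_def using that by auto
  obtain k0 where k0: "k0 < n" "x $ k0 = M"
    using Max_in[of "(\<lambda>k. x $ k) ` {..<n}"] \<open>n > 0\<close> unfolding M_def by fastforce
  define S where "S = {k. k < n \<and> x $ k = M}"
  have "\<exists>C'\<subseteq>S. closed_irreducible Q C'"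
  proof (rule closed_set_contains_class)
    show "S \<subseteq> {..<n}" "S \<noteq> {}" using k0 by (auto simp: S_def)
    show "j \<in> S" if "i \<in> S" "j < n" "Q $$ (i,j) > 0" for i j
    proof -
      have "i < n" "x $ i = M" using that(1) by (auto simp: S_def)
      have "x $ j = x $ i"
        by (rule harmonic_argmax_step[OF x h \<open>i < n\<close> that(2) _ that(3)]) (use le \<open>x $ i = M\<close> in auto)
      thus ?thesis using that(2) \<open>x $ i = M\<close> by (simp add: S_def)
    qed
  qed
  then obtain C' where "C' \<subseteq> S" "closed_irreducible Q C'" by blast
  hence "C \<subseteq> S" using C(2)[of C'] by simp
  thus ?thesis using i le[OF k] unfolding S_def by auto
qed

(* The maximum principle applied to x and -x. *)
lemma harmonic_const:
  assumes "\<exists>!C. closed_irreducible Q C" and x: "x \<in> carrier_vec n" and h: "Q *\<^sub>v x = x"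
  shows "\<exists>c. \<forall>i<n. x $ i = c"
proof -
  obtain C where C: "closed_irreducible Q C" "\<And>C'. closed_irreducible Q C' \<Longrightarrow> C' = C"
    using assms(1) by blast
  obtain i0 where i0: "i0 \<in> C" using C(1) unfolding closed_irreducible_def by blast
  have hneg: "Q *\<^sub>v (-x) = -x"
  proof (rule eq_vecI)
    fix i assume "i < dim_vec (-x)"
    hence i: "i < n" using x by simp
    have "(Q *\<^sub>v (-x)) $ i = - (Q *\<^sub>v x) $ i" using x i by (simp add: mult_vec_index sum_negf)
    thus "(Q *\<^sub>v (-x)) $ i = (-x) $ i" using h x i by simp
  qed (use x in simp)
  have i0n: "i0 < n" using C(1) i0 unfolding closed_irreducible_def by auto
  have "x $ k = x $ i0" if "k < n" for k
    using harmonic_max_on_class[OF C x h i0 that] harmonic_max_on_class[OF C _ hneg i0 that] x i0n that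
    by simp
  thus ?thesis by blast
qed

lemma pow_commute: "Q ^\<^sub>m j * Q = Q * Q ^\<^sub>m j"
proof (induction j)
  case 0 thus ?case using carrier by simp
next
  case (Suc j)
  have "Q ^\<^sub>m Suc j * Q = (Q * Q ^\<^sub>m j) * Q" using Suc.IH by simp
  also have "\<dots> = Q * Q ^\<^sub>m Suc j" using assoc_mult_mat[OF carrier pow_carrier_mat[OF carrier] carrier] by simp
  finally show ?case .
qed

lemma pow_Suc_mult_vec: "x \<in> carrier_vec n \<Longrightarrow> Q ^\<^sub>m Suc j *\<^sub>v x = Q *\<^sub>v (Q ^\<^sub>m j *\<^sub>v x)"
  using pow_commute[of j] assoc_mult_mat_vec[OF carrier pow_carrier_mat[OF carrier]] by simp

lemma pow_mult_vec_carrier[simp]: "x \<in> carrier_vec n \<Longrightarrow> Q ^\<^sub>m j *\<^sub>v x \<in> carrier_vec n"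
  using mult_mat_vec_carrier[OF pow_carrier_mat[OF carrier]] by blast

lemma pow_mult_vec_bounds:
  assumes "x \<in> carrier_vec n" "\<And>k. k < n \<Longrightarrow> a \<le> x $ k \<and> x $ k \<le> b" "i < n"
  shows "a \<le> (Q ^\<^sub>m j *\<^sub>v x) $ i \<and> (Q ^\<^sub>m j *\<^sub>v x) $ i \<le> b"
  using assms(3)
proof (induction j arbitrary: i)
  case 0 thus ?case using assms by simp
next
  case (Suc j)
  define y where "y = Q ^\<^sub>m j *\<^sub>v x"
  have y: "y \<in> carrier_vec n" unfolding y_def using assms(1) by simp
  have "a \<le> (Q *\<^sub>v y) $ i" by (rule mult_vec_ge[OF y _ Suc.prems]) (use Suc.IH y_def in auto)
  moreover have "(Q *\<^sub>v y) $ i \<le> b" by (rule mult_vec_le[OF y _ Suc.prems]) (use Suc.IH y_def in auto)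
  ultimately show ?case unfolding pow_Suc_mult_vec[OF assms(1)] y_def by simp
qed

lemma pow_mult_vec_abs_le:
  assumes x: "x \<in> carrier_vec n" and i: "i < n"
  shows "\<bar>(Q ^\<^sub>m j *\<^sub>v x) $ i\<bar> \<le> (\<Sum>k<n. \<bar>x $ k\<bar>)"
proof -
  have "\<bar>x $ k\<bar> \<le> (\<Sum>k<n. \<bar>x $ k\<bar>)" if "k < n" for k
    by (rule member_le_sum) (use that in auto)
  hence "- (\<Sum>k<n. \<bar>x $ k\<bar>) \<le> x $ k \<and> x $ k \<le> (\<Sum>k<n. \<bar>x $ k\<bar>)" if "k < n" for k
    using that by (meson abs_le_D1 abs_le_D2 minus_le_iff)
  from pow_mult_vec_bounds[OF x this i, where j=j] show ?thesis unfolding abs_le_iff by linarith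
qed

definition resolvent :: "real \<Rightarrow> real vec \<Rightarrow> real vec" where
  "resolvent c x = vec n (\<lambda>i. \<Sum>j. c ^ j * (Q ^\<^sub>m j *\<^sub>v x) $ i)"

lemma resolvent_carrier[simp]: "resolvent c x \<in> carrier_vec n"
  unfolding resolvent_def by simp

lemma summable_resolvent:
  assumes c: "0 \<le> c" "c < 1" and x: "x \<in> carrier_vec n" and i: "i < n"
  shows "summable (\<lambda>j. c ^ j * (Q ^\<^sub>m j *\<^sub>v x) $ i)"
proof (rule summable_comparison_test)
  show "summable (\<lambda>j. (\<Sum>k<n. \<bar>x $ k\<bar>) * c ^ j)" using c by simp
  show "\<exists>N. \<forall>j\<ge>N. norm (c ^ j * (Q ^\<^sub>m j *\<^sub>v x) $ i) \<le> (\<Sum>k<n. \<bar>x $ k\<bar>) * c ^ j"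
    using pow_mult_vec_abs_le[OF x i] c by (simp add: abs_mult mult.commute mult_left_mono)
qed

lemma mult_vec_resolvent:
  assumes c: "0 \<le> c" "c < 1" and x: "x \<in> carrier_vec n" and i: "i < n"
  shows "(Q *\<^sub>v resolvent c x) $ i = (\<Sum>j. c ^ j * (Q ^\<^sub>m Suc j *\<^sub>v x) $ i)"
proof -
  have s: "summable (\<lambda>j. c ^ j * (Q ^\<^sub>m j *\<^sub>v x) $ k)" if "k < n" for k
    using summable_resolvent[OF c x that] .
  have "(Q *\<^sub>v resolvent c x) $ i = (\<Sum>k<n. Q $$ (i,k) * (\<Sum>j. c ^ j * (Q ^\<^sub>m j *\<^sub>v x) $ k))"
    unfolding mult_vec_index[OF resolvent_carrier i] by (simp add: resolvent_def)
  also have "\<dots> = (\<Sum>k<n. \<Sum>j. Q $$ (i,k) * (c ^ j * (Q ^\<^sub>m j *\<^sub>v x) $ k))"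
    using s by (simp add: suminf_mult)
  also have "\<dots> = (\<Sum>j. \<Sum>k<n. Q $$ (i,k) * (c ^ j * (Q ^\<^sub>m j *\<^sub>v x) $ k))"
    using s by (intro suminf_sum[symmetric] summable_mult) simp
  also have "\<dots> = (\<Sum>j. c ^ j * (Q ^\<^sub>m Suc j *\<^sub>v x) $ i)"
  proof (rule suminf_cong)
    fix j
    show "(\<Sum>k<n. Q $$ (i,k) * (c ^ j * (Q ^\<^sub>m j *\<^sub>v x) $ k)) = c ^ j * (Q ^\<^sub>m Suc j *\<^sub>v x) $ i"
      unfolding pow_Suc_mult_vec[OF x] mult_vec_index[OF pow_mult_vec_carrier[OF x] i] by (simp add: sum_distrib_left mult_ac)
  qed
  finally show ?thesis .
qed

lemma resolvent_eq:
  assumes c: "0 \<le> c" "c < 1" and x: "x \<in> carrier_vec n" and i: "i < n"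
  shows "resolvent c x $ i - c * (Q *\<^sub>v resolvent c x) $ i = x $ i"
proof -
  have s: "summable (\<lambda>j. c ^ j * (Q ^\<^sub>m j *\<^sub>v x) $ i)" by (rule summable_resolvent[OF c x i])
  have head: "(\<Sum>j. c ^ Suc j * (Q ^\<^sub>m Suc j *\<^sub>v x) $ i) = (\<Sum>j. c ^ j * (Q ^\<^sub>m j *\<^sub>v x) $ i) - x $ i"
    using suminf_split_head[OF s] x i by simp
  have "Q ^\<^sub>m Suc j *\<^sub>v x = Q ^\<^sub>m j *\<^sub>v (Q *\<^sub>v x)" for j
    using assoc_mult_mat_vec[OF pow_carrier_mat[OF carrier] carrier x] by simp
  hence s1: "summable (\<lambda>j. c ^ j * (Q ^\<^sub>m Suc j *\<^sub>v x) $ i)"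
    using summable_resolvent[OF c _ i, of "Q *\<^sub>v x"] x carrier by simp
  have "(\<Sum>j. c ^ Suc j * (Q ^\<^sub>m Suc j *\<^sub>v x) $ i) = (\<Sum>j. c * (c ^ j * (Q ^\<^sub>m Suc j *\<^sub>v x) $ i))"
    by (simp only: power_Suc mult.assoc)
  also have "\<dots> = c * (Q *\<^sub>v resolvent c x) $ i"
    unfolding mult_vec_resolvent[OF c x i] by (rule suminf_mult[OF s1])
  finally have "(\<Sum>j. c ^ Suc j * (Q ^\<^sub>m Suc j *\<^sub>v x) $ i) = c * (Q *\<^sub>v resolvent c x) $ i" .
  with head show ?thesis using i by (simp add: resolvent_def)
qed

lemma resolvent_min_principle:
  assumes x: "x \<in> carrier_vec n" and c: "0 \<le> c" "c < 1"
    and lower: "\<And>i. i < n \<Longrightarrow> a \<le> x $ i - c * (Q *\<^sub>v x) $ i" and i: "i < n"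
  shows "a / (1 - c) \<le> x $ i"
proof -
  define z where "z = Min ((\<lambda>k. x $ k) ` {..<n})"
  have z_le: "z \<le> x $ k" if "k < n" for k unfolding z_def using that by auto
  obtain k0 where k0: "k0 < n" "x $ k0 = z"
    using Min_in[of "(\<lambda>k. x $ k) ` {..<n}"] i unfolding z_def by fastforce
  have "c * z \<le> c * (Q *\<^sub>v x) $ k0" using mult_vec_ge[OF x z_le k0(1)] c by (simp add: mult_left_mono)
  hence "a \<le> (1 - c) * z" using lower[OF k0(1)] k0(2) by (simp add: algebra_simps)
  hence "a / (1 - c) \<le> z" using c by (simp add: divide_le_eq mult.commute)
  thus ?thesis using z_le[OF i] by simp
qed

lemma diag_mult_carrier: "v \<in> carrier_vec n \<Longrightarrow> diag_vec v * Q \<in> carrier_mat n n"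
  using mat_diag_mult_left[OF carrier, of "\<lambda>i. v $ i"] by (auto simp: diag_vec_def)

lemma diag_mult_index: "v \<in> carrier_vec n \<Longrightarrow> i < n \<Longrightarrow> j < n \<Longrightarrow> (diag_vec v * Q) $$ (i,j) = v $ i * Q $$ (i,j)"
  using mat_diag_mult_left[OF carrier, of "\<lambda>i. v $ i"] by (auto simp: diag_vec_def)

lemma row_mult_diag_scalar_prod:
  assumes v: "v \<in> carrier_vec n" and m: "m \<in> carrier_vec n" and x: "x \<in> carrier_vec n"
  shows "row_mult m (diag_vec v * Q) \<bullet> x = (\<Sum>k<n. m $ k * v $ k * (Q *\<^sub>v x) $ k)"
proof -
  have "row_mult m (diag_vec v * Q) \<bullet> x = (\<Sum>j<n. (\<Sum>k<n. v $ k * Q $$ (k,j) * m $ k) * x $ j)"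
    unfolding scalar_prod_lessThan[OF x]
    by (rule sum.cong) (simp_all add: row_mult_index[OF diag_mult_carrier[OF v] m] diag_mult_index[OF v])
  also have "\<dots> = (\<Sum>j<n. \<Sum>k<n. v $ k * Q $$ (k,j) * m $ k * x $ j)"
    by (simp add: sum_distrib_right)
  also have "\<dots> = (\<Sum>k<n. \<Sum>j<n. v $ k * Q $$ (k,j) * m $ k * x $ j)"
    by (rule sum.swap)
  also have "\<dots> = (\<Sum>k<n. m $ k * v $ k * (Q *\<^sub>v x) $ k)"
    by (rule sum.cong) (simp_all add: mult_vec_index[OF x] sum_distrib_left mult_ac)
  finally show ?thesis .
qed

end

lemma stochastic_matrixI: "stochastic_mat Q \<Longrightarrow> stochastic_matrix (dim_row Q) Q"
  unfolding stochastic_mat_def stochastic_matrix_def by auto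

section \<open>The vector r(q, Q)\<close>

locale r_vec_setting = stochastic_matrix +
  fixes m q :: "real vec"
  assumes m_stationary: "stationary Q m"
    and stat_dist_eq: "stat_dist Q = m"
    and harmonic_vec_const: "\<And>x. x \<in> carrier_vec n \<Longrightarrow> Q *\<^sub>v x = x \<Longrightarrow> \<exists>c. \<forall>i<n. x $ i = c"
    and q_carrier: "q \<in> carrier_vec n"
    and m_q: "m \<bullet> q = 1/2"
begin

lemma m_distribution: "is_distribution n m"
  using m_stationary unfolding stationary_def by simp

lemma m_carrier: "m \<in> carrier_vec n"
  using distribution_carrier[OF m_distribution] .

lemma m_sum: "(\<Sum>i<n. m $ i) = 1"
  and m_nonneg: "i < n \<Longrightarrow> m $ i \<ge> 0"
  using m_distribution unfolding is_distribution_def by auto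

lemma m_q_sum: "(\<Sum>i<n. m $ i * q $ i) = 1/2"
  using m_q scalar_prod_lessThan[OF q_carrier] by simp

lemma m_one_minus_q_sum: "(\<Sum>i<n. m $ i * (1 - q $ i)) = 1/2"
  using m_sum m_q_sum by (simp add: algebra_simps sum_subtractf)

lemma stationary_index: "j < n \<Longrightarrow> (\<Sum>k<n. Q $$ (k,j) * m $ k) = m $ j"
proof -
  assume j: "j < n"
  have "row_mult m Q $ j = m $ j" using m_stationary unfolding stationary_def by simp
  thus ?thesis using row_mult_index[OF carrier m_carrier j] by simp
qed

lemma stationary_weighted_sum: "(\<Sum>i<n. m $ i * (\<Sum>j<n. Q $$ (i,j) * g j)) = (\<Sum>j<n. m $ j * g j)"
proof -
  have "(\<Sum>i<n. m $ i * (\<Sum>j<n. Q $$ (i,j) * g j)) = (\<Sum>i<n. \<Sum>j<n. Q $$ (i,j) * m $ i * g j)"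
    by (simp add: sum_distrib_left mult_ac)
  also have "\<dots> = (\<Sum>j<n. \<Sum>i<n. Q $$ (i,j) * m $ i * g j)" by (rule sum.swap)
  also have "\<dots> = (\<Sum>j<n. (\<Sum>i<n. Q $$ (i,j) * m $ i) * g j)"
    by (simp add: sum_distrib_right)
  also have "\<dots> = (\<Sum>j<n. m $ j * g j)"
    by (rule sum.cong) (simp_all add: stationary_index)
  finally show ?thesis .
qed

lemma stationary_mult_vec_sum:
  "x \<in> carrier_vec n \<Longrightarrow> (\<Sum>i<n. m $ i * (Q *\<^sub>v x) $ i) = (\<Sum>j<n. m $ j * x $ j)"
proof -
  assume x: "x \<in> carrier_vec n"
  have "(\<Sum>i<n. m $ i * (Q *\<^sub>v x) $ i) = (\<Sum>i<n. m $ i * (\<Sum>j<n. Q $$ (i,j) * x $ j))"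
    by (rule sum.cong) (simp_all add: mult_vec_index[OF x])
  thus ?thesis using stationary_weighted_sum[of "\<lambda>j. x $ j"] by simp
qed

(* The linear form x \<mapsto> m D_(1-q) Q x of the rank-one term in the definition of r_vec. *)
definition rank_one_form :: "real vec \<Rightarrow> real" where
  "rank_one_form x = (\<Sum>k<n. m $ k * (1 - q $ k) * (Q *\<^sub>v x) $ k)"

definition r_row :: "real vec" where
  "r_row = row_mult m (diag_vec (ones_vec n - q) * Q)"

definition r_matrix :: "real mat" where
  "r_matrix = 1\<^sub>m n - Q + outer_prod (2 \<cdot>\<^sub>v (ones_vec n - q)) r_row"

lemma r_row_carrier: "r_row \<in> carrier_vec n"
proof -
  have "diag_vec (ones_vec n - q) * Q \<in> carrier_mat n n"
    by (rule diag_mult_carrier) (use q_carrier in simp)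
  thus ?thesis unfolding r_row_def by (intro carrier_vecI) simp
qed

lemma r_row_scalar_prod:
  assumes x: "x \<in> carrier_vec n"
  shows "r_row \<bullet> x = rank_one_form x"
proof -
  have "r_row \<bullet> x = (\<Sum>k<n. m $ k * (ones_vec n - q) $ k * (Q *\<^sub>v x) $ k)"
    unfolding r_row_def by (rule row_mult_diag_scalar_prod[OF _ m_carrier x]) (use q_carrier in simp)
  also have "\<dots> = rank_one_form x"
    unfolding rank_one_form_def by (rule sum.cong) (use q_carrier in simp_all)
  finally show ?thesis .
qed

lemma r_matrix_carrier: "r_matrix \<in> carrier_mat n n"
  unfolding r_matrix_def using q_carrier r_row_carrier by (simp add: outer_prod_def)

lemma r_matrix_mult_vec:
  assumes x: "x \<in> carrier_vec n" and i: "i < n"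
  shows "(r_matrix *\<^sub>v x) $ i = x $ i - (Q *\<^sub>v x) $ i + 2 * (1 - q $ i) * rank_one_form x"
proof -
  have entry: "r_matrix $$ (i,j) = (if i = j then 1 else 0) - Q $$ (i,j) + 2 * (1 - q $ i) * r_row $ j"
    if "j < n" for j
    unfolding r_matrix_def using i that q_carrier r_row_carrier by (simp add: outer_prod_def)
  have "(r_matrix *\<^sub>v x) $ i
      = (\<Sum>j<n. (if i = j then x $ j else 0) - Q $$ (i,j) * x $ j + 2 * (1 - q $ i) * (r_row $ j * x $ j))"
    unfolding mult_mat_vec_index_sum[OF r_matrix_carrier x i] by (rule sum.cong) (simp_all add: entry algebra_simps)
  also have "\<dots> = x $ i - (Q *\<^sub>v x) $ i + 2 * (1 - q $ i) * (r_row \<bullet> x)"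
    using i by (simp add: sum.distrib sum_subtractf sum_distrib_left mult_vec_index[OF x] scalar_prod_lessThan[OF x])
  finally show ?thesis unfolding r_row_scalar_prod[OF x] .
qed

lemma rank_one_form_add: "x \<in> carrier_vec n \<Longrightarrow> y \<in> carrier_vec n \<Longrightarrow> rank_one_form (x + y) = rank_one_form x + rank_one_form y"
  unfolding rank_one_form_def by (simp add: mult_vec_add distrib_left sum.distrib)

lemma rank_one_form_smult: "x \<in> carrier_vec n \<Longrightarrow> rank_one_form (c \<cdot>\<^sub>v x) = c * rank_one_form x"
  unfolding rank_one_form_def by (simp add: mult_vec_smult sum_distrib_left algebra_simps)

lemma rank_one_form_ones: "rank_one_form (ones_vec n) = 1/2"
  unfolding rank_one_form_def using m_one_minus_q_sum by (simp add: mult_vec_ones)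

lemma stationary_collapse:
  assumes x: "x \<in> carrier_vec n"
  shows "(\<Sum>i<n. m $ i * (x $ i - (Q *\<^sub>v x) $ i + 2 * (1 - q $ i) * W)) = W"
proof -
  have "(\<Sum>i<n. m $ i * (x $ i - (Q *\<^sub>v x) $ i + 2 * (1 - q $ i) * W))
      = (\<Sum>i<n. m $ i * x $ i) - (\<Sum>i<n. m $ i * (Q *\<^sub>v x) $ i) + 2 * W * (\<Sum>i<n. m $ i * (1 - q $ i))"
    by (simp add: algebra_simps sum.distrib sum_subtractf sum_distrib_left)
  thus ?thesis using stationary_mult_vec_sum[OF x] m_one_minus_q_sum by simp
qed

lemma r_matrix_injective:
  assumes x: "x \<in> carrier_vec n" and zero: "r_matrix *\<^sub>v x = 0\<^sub>v n"
  shows "x = 0\<^sub>v n"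
proof -
  have e: "x $ i - (Q *\<^sub>v x) $ i + 2 * (1 - q $ i) * rank_one_form x = 0" if "i < n" for i
  proof -
    have "(r_matrix *\<^sub>v x) $ i = 0" using zero that by simp
    thus ?thesis using r_matrix_mult_vec[OF x that] by simp
  qed
  have W0: "rank_one_form x = 0"
    using stationary_collapse[OF x, of "rank_one_form x"] e by simp
  have "Q *\<^sub>v x = x"
    using e W0 x by (intro eq_vecI) auto
  then obtain c where "\<forall>i<n. x $ i = c" using harmonic_vec_const x by blast
  hence xc: "x = c \<cdot>\<^sub>v ones_vec n" using x by (intro eq_vecI) auto
  have "c = 0" using W0 rank_one_form_smult[of "ones_vec n" c] rank_one_form_ones xc by simp
  thus ?thesis using xc by auto
qed

lemma r_matrix_inverse:
  obtains B where "B \<in> carrier_mat n n" "r_matrix * B = 1\<^sub>m n" "B * r_matrix = 1\<^sub>m n" "mat_inv r_matrix = B"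
proof -
  have "Determinant.det r_matrix \<noteq> 0"
    using det_0_iff_vec_prod_zero[OF r_matrix_carrier] r_matrix_injective by auto
  from det_non_zero_imp_unit[OF r_matrix_carrier this, unfolded Units_def, of "()"]
  obtain B where B: "B \<in> carrier_mat n n" "B * r_matrix = 1\<^sub>m n" "r_matrix * B = 1\<^sub>m n"
    by (auto simp: ring_mat_def)
  have "mat_inv r_matrix = B" unfolding mat_inv_def
  proof (rule the_equality)
    fix B' assume "B' \<in> carrier_mat (dim_row r_matrix) (dim_row r_matrix) \<and>
      r_matrix * B' = 1\<^sub>m (dim_row r_matrix) \<and> B' * r_matrix = 1\<^sub>m (dim_row r_matrix)"
    hence B': "B' \<in> carrier_mat n n" "B' * r_matrix = 1\<^sub>m n" using r_matrix_carrier by auto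
    have "B' = B' * (r_matrix * B)" using B B' by simp
    also have "\<dots> = (B' * r_matrix) * B" using assoc_mult_mat[OF B'(1) r_matrix_carrier B(1)] by simp
    finally show "B' = B" using B B' by simp
  qed (use B r_matrix_carrier in auto)
  thus ?thesis using that B by blast
qed

(* r - Q r = 2 q - 1 determines r only up to an additive constant (harmonic vectors are constant);
   the rank-one term of r_matrix fixes the constant. *)
definition r_system :: "real vec \<Rightarrow> bool" where
  "r_system y \<longleftrightarrow> y \<in> carrier_vec n \<and> (\<forall>i<n. y $ i - (Q *\<^sub>v y) $ i = 2 * q $ i - 1) \<and> rank_one_form y = 0"

lemma r_system_iff:
  assumes y: "y \<in> carrier_vec n"
  shows "r_system y \<longleftrightarrow> r_matrix *\<^sub>v (y + ones_vec n) = q"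
proof -
  have idx: "(r_matrix *\<^sub>v (y + ones_vec n)) $ i = y $ i - (Q *\<^sub>v y) $ i + 2 * (1 - q $ i) * (rank_one_form y + 1/2)"
    if "i < n" for i
    using r_matrix_mult_vec[of "y + ones_vec n" i] rank_one_form_add[OF y ones_vec_carrier] rank_one_form_ones
      mult_vec_add[OF y ones_vec_carrier that] mult_vec_ones[OF that] y that by simp
  show ?thesis
  proof
    assume "r_system y"
    thus "r_matrix *\<^sub>v (y + ones_vec n) = q"
      using idx q_carrier r_matrix_carrier by (intro eq_vecI) (auto simp: r_system_def algebra_simps)
  next
    assume eq: "r_matrix *\<^sub>v (y + ones_vec n) = q"
    hence e: "y $ i - (Q *\<^sub>v y) $ i + 2 * (1 - q $ i) * (rank_one_form y + 1/2) = q $ i" if "i < n" for i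
      using idx[OF that] by simp
    have "rank_one_form y + 1/2 = 1/2"
      using stationary_collapse[OF y, of "rank_one_form y + 1/2"] e m_q_sum by simp
    thus "r_system y" using y e unfolding r_system_def by (simp add: algebra_simps)
  qed
qed

lemma r_vec_eq: "r_vec q Q = mat_inv r_matrix *\<^sub>v q - ones_vec n"
  by (simp only: r_vec_def Let_def stat_dist_eq dim r_matrix_def r_row_def)

lemma r_vec_solves: "r_system (r_vec q Q)"
proof -
  obtain B where B: "B \<in> carrier_mat n n" "r_matrix * B = 1\<^sub>m n" "mat_inv r_matrix = B"
    using r_matrix_inverse by blast
  have rc: "r_vec q Q \<in> carrier_vec n" using B q_carrier by (simp add: r_vec_eq)
  have "r_vec q Q + ones_vec n = B *\<^sub>v q" using B q_carrier by (intro eq_vecI) (auto simp: r_vec_eq)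
  hence "r_matrix *\<^sub>v (r_vec q Q + ones_vec n) = (r_matrix * B) *\<^sub>v q"
    using assoc_mult_mat_vec[OF r_matrix_carrier B(1) q_carrier] by simp
  thus ?thesis using r_system_iff[OF rc] B q_carrier by simp
qed

lemma r_vec_unique: assumes "r_system y" shows "r_vec q Q = y"
proof -
  obtain B where B: "B \<in> carrier_mat n n" "B * r_matrix = 1\<^sub>m n" "mat_inv r_matrix = B"
    using r_matrix_inverse by blast
  have y: "y \<in> carrier_vec n" using assms r_system_def by blast
  have "B *\<^sub>v q = (B * r_matrix) *\<^sub>v (y + ones_vec n)"
    using assoc_mult_mat_vec[OF B(1) r_matrix_carrier, of "y + ones_vec n"] r_system_iff[OF y] assms y by simp
  hence "B *\<^sub>v q = y + ones_vec n" using B y by simp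
  thus ?thesis using B y by (intro eq_vecI) (auto simp: r_vec_eq)
qed

lemma r_vec_carrier: "r_vec q Q \<in> carrier_vec n"
  using r_vec_solves r_system_def by blast

lemma nu_eq_sum: "nu q Q = 2 + 4 * (\<Sum>k<n. m $ k * q $ k * (Q *\<^sub>v r_vec q Q) $ k)"
  using row_mult_diag_scalar_prod[OF q_carrier m_carrier r_vec_carrier] by (simp only: nu_def stat_dist_eq)

lemma stationary_mult_vec_square_le:
  assumes x: "x \<in> carrier_vec n"
  shows "(\<Sum>i<n. m $ i * ((Q *\<^sub>v x) $ i)\<^sup>2) \<le> (\<Sum>j<n. m $ j * (x $ j)\<^sup>2)"
proof -
  have "((Q *\<^sub>v x) $ i)\<^sup>2 \<le> (\<Sum>j<n. Q $$ (i,j) * (x $ j)\<^sup>2)" if i: "i < n" for i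
  proof -
    define a where "a = (Q *\<^sub>v x) $ i"
    have "0 \<le> (\<Sum>j<n. Q $$ (i,j) * (x $ j - a)\<^sup>2)"
      using nonneg i by (intro sum_nonneg mult_nonneg_nonneg) simp_all
    also have "\<dots> = (\<Sum>j<n. Q $$ (i,j) * (x $ j)\<^sup>2) - 2 * a * (\<Sum>j<n. Q $$ (i,j) * x $ j) + a\<^sup>2 * (\<Sum>j<n. Q $$ (i,j))"
      by (simp add: power2_diff algebra_simps sum.distrib sum_subtractf sum_distrib_left)
    also have "\<dots> = (\<Sum>j<n. Q $$ (i,j) * (x $ j)\<^sup>2) - a\<^sup>2"
      using row_sum[OF i] mult_vec_index[OF x i] unfolding a_def by (simp add: power2_eq_square)
    finally show ?thesis unfolding a_def by simp
  qed
  hence "(\<Sum>i<n. m $ i * ((Q *\<^sub>v x) $ i)\<^sup>2) \<le> (\<Sum>i<n. m $ i * (\<Sum>j<n. Q $$ (i,j) * (x $ j)\<^sup>2))"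
    by (intro sum_mono mult_left_mono) (simp_all add: m_nonneg)
  thus ?thesis unfolding stationary_weighted_sum .
qed

(* With a = Q r and f = 2 q - 1 we have r = a + f, and the definition of nu rearranges to
   nu = 2 \<Sum> m (1 - f\<^sup>2) + 2 (\<Sum> m r\<^sup>2 - \<Sum> m a\<^sup>2); the second term is nonnegative by
   Jensen and stationarity, the first is positive since 0 < q < 1. *)
lemma nu_pos:
  assumes q01: "\<And>i. i < n \<Longrightarrow> 0 < q $ i \<and> q $ i < 1"
  shows "nu q Q > 0"
proof -
  define r where "r = r_vec q Q"
  define a where "a i = (Q *\<^sub>v r) $ i" for i
  define f where "f i = 2 * q $ i - 1" for i
  have rc: "r \<in> carrier_vec n" and r_eq: "\<And>i. i < n \<Longrightarrow> r $ i = a i + f i"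
    and W0: "(\<Sum>k<n. m $ k * (1 - q $ k) * a k) = 0"
    using r_vec_solves unfolding r_system_def rank_one_form_def r_def a_def f_def by auto
  have "nu q Q = 2 * (\<Sum>i<n. m $ i) + 4 * (\<Sum>k<n. m $ k * q $ k * a k) - 4 * (\<Sum>k<n. m $ k * (1 - q $ k) * a k)"
    using nu_eq_sum m_sum W0 unfolding r_def a_def by simp
  also have "\<dots> = (\<Sum>i<n. m $ i * (2 + 4 * f i * a i))"
    by (simp add: f_def algebra_simps sum.distrib sum_subtractf sum_distrib_left)
  also have "\<dots> = 2 * (\<Sum>i<n. m $ i * (1 - (f i)\<^sup>2)) + 2 * ((\<Sum>i<n. m $ i * (a i + f i)\<^sup>2) - (\<Sum>i<n. m $ i * (a i)\<^sup>2))"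
    by (simp add: power2_eq_square algebra_simps sum.distrib sum_subtractf sum_distrib_left)
  also have "(\<Sum>i<n. m $ i * (a i + f i)\<^sup>2) = (\<Sum>i<n. m $ i * (r $ i)\<^sup>2)"
    by (rule sum.cong) (simp_all add: r_eq)
  finally have nu: "nu q Q = 2 * (\<Sum>i<n. m $ i * (1 - (f i)\<^sup>2))
      + 2 * ((\<Sum>i<n. m $ i * (r $ i)\<^sup>2) - (\<Sum>i<n. m $ i * (a i)\<^sup>2))" .
  have "(\<Sum>i<n. m $ i * (a i)\<^sup>2) \<le> (\<Sum>i<n. m $ i * (r $ i)\<^sup>2)"
    unfolding a_def by (rule stationary_mult_vec_square_le[OF rc])
  moreover have "0 < (\<Sum>i<n. m $ i * (1 - (f i)\<^sup>2))"
  proof -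
    have pos: "1 - (f i)\<^sup>2 > 0" if "i < n" for i
      using q01[OF that] unfolding f_def by (simp add: power2_eq_square algebra_simps mult_pos_pos)
    have "\<not> (\<forall>i<n. m $ i \<le> 0)"
      using m_sum sum_nonpos[of "{..<n}" "\<lambda>i. m $ i"] by auto
    then obtain i0 where i0: "i0 < n" "m $ i0 > 0" by (auto simp: not_le)
    have "m $ i0 * (1 - (f i0)\<^sup>2) \<le> (\<Sum>i<n. m $ i * (1 - (f i)\<^sup>2))"
      using i0 m_nonneg pos by (intro member_le_sum) (auto simp: less_imp_le)
    moreover have "0 < m $ i0 * (1 - (f i0)\<^sup>2)" using i0 pos by simp
    ultimately show ?thesis by linarith
  qed
  ultimately show ?thesis unfolding nu by (intro add_pos_nonneg) simp_all
qed

end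

section \<open>The two-block chain\<close>

context stochastic_matrix
begin

lemma scaled_fixed_point_zero:
  assumes x: "x \<in> carrier_vec n" and c: "0 \<le> c" "c < 1"
    and fixed: "\<And>i. i < n \<Longrightarrow> x $ i = c * (Q *\<^sub>v x) $ i" and i: "i < n"
  shows "x $ i = 0"
proof -
  define B where "B = Max ((\<lambda>k. \<bar>x $ k\<bar>) ` {..<n})"
  have le: "\<bar>x $ k\<bar> \<le> B" if "k < n" for k unfolding B_def using that by auto
  obtain k0 where k0: "k0 < n" "\<bar>x $ k0\<bar> = B"
    using Max_in[of "(\<lambda>k. \<bar>x $ k\<bar>) ` {..<n}"] i unfolding B_def by fastforce
  have "B = c * \<bar>(Q *\<^sub>v x) $ k0\<bar>" using fixed[OF k0(1)] k0(2) c by (simp add: abs_mult)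
  also have "\<dots> \<le> c * B" using mult_vec_abs_le[OF x le k0(1)] c by (simp add: mult_left_mono)
  finally have "B \<le> 0" using c by (simp add: mult_le_cancel_right1)
  thus ?thesis using le[OF i] by simp
qed

lemma hatK_carrier: "hatK Q e \<in> carrier_mat (n+n) (n+n)"
  unfolding hatK_def by (intro four_block_carrier_mat) (simp_all add: carrier)

lemma hatK_index:
  "i < n \<Longrightarrow> j < n \<Longrightarrow> hatK Q e $$ (i,j) = (1-e) * Q $$ (i,j)"
  "i < n \<Longrightarrow> j < n \<Longrightarrow> hatK Q e $$ (i,n+j) = e * Q $$ (i,j)"
  "i < n \<Longrightarrow> j < n \<Longrightarrow> hatK Q e $$ (n+i,j) = 0"
  "i < n \<Longrightarrow> j < n \<Longrightarrow> hatK Q e $$ (n+i,n+j) = Q $$ (i,j)"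
  unfolding hatK_def by (simp_all add: index_mat_four_block)

lemma hatK_mult_vec_upper:
  assumes z: "z \<in> carrier_vec (n+n)" and i: "i < n"
  shows "(hatK Q e *\<^sub>v z) $ i = (1-e) * (\<Sum>j<n. Q $$ (i,j) * z $ j) + e * (\<Sum>j<n. Q $$ (i,j) * z $ (n+j))"
  unfolding mult_mat_vec_index_sum[OF hatK_carrier z trans_less_add1[OF i]] sum_lessThan_add
  using i by (simp add: hatK_index sum_distrib_left mult.assoc)

lemma hatK_mult_vec_lower:
  assumes z: "z \<in> carrier_vec (n+n)" and i: "i < n"
  shows "(hatK Q e *\<^sub>v z) $ (n+i) = (\<Sum>j<n. Q $$ (i,j) * z $ (n+j))"
proof -
  have "(hatK Q e *\<^sub>v z) $ (n+i) = (\<Sum>j<n+n. hatK Q e $$ (n+i,j) * z $ j)"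
    by (rule mult_mat_vec_index_sum[OF hatK_carrier z]) (use i in simp)
  thus ?thesis unfolding sum_lessThan_add using i by (simp add: hatK_index)
qed

lemma hatK_stochastic:
  assumes "0 \<le> e" "e \<le> 1"
  shows "stochastic_matrix (n+n) (hatK Q e)"
proof
  show "hatK Q e \<in> carrier_mat (n+n) (n+n)" by (rule hatK_carrier)
  show "hatK Q e $$ (i,j) \<ge> 0" if "i < n+n" "j < n+n" for i j
    using that assms nonneg unfolding hatK_def by (simp add: index_mat_four_block)
  show "(\<Sum>j<n+n. hatK Q e $$ (i,j)) = 1" if i: "i < n+n" for i
  proof (cases "i < n")
    case True
    thus ?thesis unfolding sum_lessThan_add
      using row_sum[OF True] by (simp add: hatK_index flip: sum_distrib_left)
  next
    case False
    then obtain i' where "i = n + i'" "i' < n" using i by (metis add_less_cancel_left le_add_diff_inverse not_less)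
    thus ?thesis unfolding sum_lessThan_add using row_sum by (simp add: hatK_index)
  qed
qed

lemma hatK_harmonic_const:
  assumes e: "0 < e" "e \<le> 1"
    and harmonic: "\<And>x. x \<in> carrier_vec n \<Longrightarrow> Q *\<^sub>v x = x \<Longrightarrow> \<exists>c. \<forall>i<n. x $ i = c"
    and z: "z \<in> carrier_vec (n+n)" and h: "hatK Q e *\<^sub>v z = z"
  shows "\<exists>c. \<forall>i<n+n. z $ i = c"
proof -
  define b where "b = vec n (\<lambda>i. z $ (n+i))"
  have "Q *\<^sub>v b = b"
    using hatK_mult_vec_lower[OF z] h unfolding b_def
    by (intro eq_vecI) (simp_all add: mult_vec_index, metis)
  then obtain c where c: "\<And>i. i < n \<Longrightarrow> z $ (n+i) = c"
    using harmonic[of b] unfolding b_def by auto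
  define u where "u = vec n (\<lambda>i. z $ i - c)"
  have u: "u \<in> carrier_vec n" unfolding u_def by simp
  have "u $ i = (1-e) * (Q *\<^sub>v u) $ i" if i: "i < n" for i
  proof -
    have Qu: "(Q *\<^sub>v u) $ i = (\<Sum>j<n. Q $$ (i,j) * z $ j) - c"
      using mult_vec_const[OF i, of c] unfolding mult_vec_index[OF u i]
      by (simp add: u_def right_diff_distrib sum_subtractf)
    have "z $ i = (1-e) * (\<Sum>j<n. Q $$ (i,j) * z $ j) + e * c"
      using hatK_mult_vec_upper[OF z i, of e] h c mult_vec_const[OF i, of c] by simp
    moreover have "u $ i = z $ i - c" using i by (simp add: u_def)
    ultimately show ?thesis unfolding Qu by (simp add: algebra_simps)
  qed
  hence "u $ i = 0" if "i < n" for i using scaled_fixed_point_zero[OF u _ _ _ that, of "1-e"] e by simp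
  hence "\<forall>i<n+n. z $ i = c" unfolding all_lessThan_add using c by (simp add: u_def)
  thus ?thesis by blast
qed

lemma hatK_stationary:
  assumes "stationary Q m"
  shows "stationary (hatK Q e) (0\<^sub>v n @\<^sub>v m)"
proof -
  have m: "is_distribution n m" "row_mult m Q = m" using assms unfolding stationary_def by auto
  have mc: "m \<in> carrier_vec n" using distribution_carrier[OF m(1)] .
  have mh: "0\<^sub>v n @\<^sub>v m \<in> carrier_vec (n+n)" using mc by simp
  have "is_distribution (n+n) (0\<^sub>v n @\<^sub>v m)"
    using m(1) mc unfolding is_distribution_def sum_lessThan_add all_lessThan_add by simp
  moreover have "row_mult (0\<^sub>v n @\<^sub>v m) (hatK Q e) $ j = (0\<^sub>v n @\<^sub>v m) $ j" if j: "j < n+n" for j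
  proof -
    have "row_mult (0\<^sub>v n @\<^sub>v m) (hatK Q e) $ j = (\<Sum>k<n. hatK Q e $$ (n+k,j) * m $ k)"
      unfolding row_mult_index[OF hatK_carrier mh j] sum_lessThan_add using mc by simp
    also have "\<dots> = (0\<^sub>v n @\<^sub>v m) $ j"
    proof (cases "j < n")
      case True thus ?thesis by (simp add: hatK_index)
    next
      case False
      then obtain j' where j': "j = n + j'" "j' < n" using j by (metis add_less_cancel_left le_add_diff_inverse not_less)
      have "(\<Sum>k<n. Q $$ (k,j') * m $ k) = m $ j'"
        using m(2) row_mult_index[OF carrier mc j'(2)] by simp
      thus ?thesis using j' mc by (simp add: hatK_index)
    qed
    finally show ?thesis .
  qed
  hence "row_mult (0\<^sub>v n @\<^sub>v m) (hatK Q e) = 0\<^sub>v n @\<^sub>v m"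
    using mh hatK_carrier[of e] by (intro eq_vecI) (simp_all del: index_append_vec)
  ultimately show ?thesis unfolding stationary_def using hatK_carrier[of e] by simp
qed

(* Stationary mass on the upper block is multiplied by 1 - e in each step, so it vanishes;
   the lower block is then stationary for Q. *)
lemma hatK_stationary_unique:
  assumes e: "0 < e" and unique: "\<And>m'. stationary Q m' \<Longrightarrow> m' = m"
    and st: "stationary (hatK Q e) m'"
  shows "m' = 0\<^sub>v n @\<^sub>v m"
proof -
  have dist: "is_distribution (n+n) m'" and fixed: "row_mult m' (hatK Q e) = m'"
    using st hatK_carrier[of e] unfolding stationary_def by auto
  have m': "m' \<in> carrier_vec (n+n)" using distribution_carrier[OF dist] .
  have nonneg': "\<And>i. i < n+n \<Longrightarrow> m' $ i \<ge> 0" and sum1: "(\<Sum>i<n+n. m' $ i) = 1"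
    using dist unfolding is_distribution_def by auto
  have col: "m' $ j = (\<Sum>k<n. hatK Q e $$ (k,j) * m' $ k) + (\<Sum>k<n. hatK Q e $$ (n+k,j) * m' $ (n+k))"
    if "j < n+n" for j
    using fixed row_mult_index[OF hatK_carrier[of e] m' that] unfolding sum_lessThan_add by simp
  have upper: "m' $ j = (1-e) * (\<Sum>k<n. Q $$ (k,j) * m' $ k)" if j: "j < n" for j
    using col[of j] j by (simp add: hatK_index sum_distrib_left mult.assoc)
  have "(\<Sum>j<n. m' $ j) = (1-e) * (\<Sum>j<n. \<Sum>k<n. Q $$ (k,j) * m' $ k)"
    by (simp add: upper sum_distrib_left)
  also have "(\<Sum>j<n. \<Sum>k<n. Q $$ (k,j) * m' $ k) = (\<Sum>k<n. \<Sum>j<n. Q $$ (k,j) * m' $ k)"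
    by (rule sum.swap)
  also have "\<dots> = (\<Sum>k<n. m' $ k)"
    by (rule sum.cong) (simp_all add: row_sum flip: sum_distrib_right)
  finally have "(\<Sum>j<n. m' $ j) = 0" using e by (simp add: algebra_simps)
  hence zero: "m' $ j = 0" if "j < n" for j
    using sum_nonneg_eq_0_iff[of "{..<n}" "\<lambda>j. m' $ j"] nonneg' that by auto
  define b where "b = vec n (\<lambda>j. m' $ (n+j))"
  have b: "b \<in> carrier_vec n" unfolding b_def by simp
  have "row_mult b Q $ j = b $ j" if j: "j < n" for j
  proof -
    have "row_mult b Q $ j = (\<Sum>k<n. hatK Q e $$ (k,n+j) * m' $ k) + (\<Sum>k<n. hatK Q e $$ (n+k,n+j) * m' $ (n+k))"
      unfolding row_mult_index[OF carrier b j] using j by (simp add: zero hatK_index b_def)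
    thus ?thesis using col[of "n+j"] j by (simp add: b_def)
  qed
  hence "row_mult b Q = b" using b by (intro eq_vecI) simp_all
  moreover have "is_distribution n b"
    using nonneg' sum1 unfolding is_distribution_def sum_lessThan_add b_def by (simp add: zero)
  ultimately have "b = m" using unique unfolding stationary_def by simp
  show ?thesis
  proof (rule eq_vecI)
    fix i assume "i < dim_vec (0\<^sub>v n @\<^sub>v m)"
    hence i: "i < n+n" using \<open>b = m\<close> b by simp
    show "m' $ i = (0\<^sub>v n @\<^sub>v m) $ i"
    proof (cases "i < n")
      case True thus ?thesis using zero by simp
    next
      case False
      then obtain i' where "i = n + i'" "i' < n" using i by (metis add_less_cancel_left le_add_diff_inverse not_less)
      thus ?thesis using \<open>b = m\<close> unfolding b_def by auto
    qed
  qed (use m' \<open>b = m\<close> b in simp)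
qed

end

section \<open>Dependence on the perturbation parameter\<close>

locale hat_chain =
  fixes N :: nat and K :: "real mat" and \<mu> \<eta> p0 p1 :: "real vec"
  assumes K_carrier: "K \<in> carrier_mat N N"
    and K_stoch: "stochastic_mat K"
    and K_class: "\<exists>!C. closed_irreducible K C"
    and mu_stat: "stationary K \<mu>"
    and mu_unique: "\<And>m. stationary K m \<Longrightarrow> m = \<mu>"
    and p0_dim: "p0 \<in> carrier_vec N" and p1_dim: "p1 \<in> carrier_vec N"
    and p0_range: "\<And>i. i < N \<Longrightarrow> 0 < p0 $ i \<and> p0 $ i < 1"
    and p1_range: "\<And>i. i < N \<Longrightarrow> 0 < p1 $ i \<and> p1 $ i < 1"
    and p_mono: "\<And>i. i < N \<Longrightarrow> p1 $ i \<ge> p0 $ i"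
    and mu_p0: "\<mu> \<bullet> p0 = 1/2"
    and mu_p1: "\<mu> \<bullet> p1 > \<mu> \<bullet> p0"
    and eta_distr: "is_distribution N \<eta>"
begin

lemma K_stochastic: "stochastic_matrix N K"
  using stochastic_matrixI[OF K_stoch] K_carrier by auto

lemma stat_dist_K: "stat_dist K = \<mu>"
  by (rule stationary_unique_stat_dist[OF mu_stat mu_unique])

lemma r_vec_setting_K: "q \<in> carrier_vec N \<Longrightarrow> \<mu> \<bullet> q = 1/2 \<Longrightarrow> r_vec_setting N K \<mu> q"
  unfolding r_vec_setting_def r_vec_setting_axioms_def
  using K_stochastic mu_stat stat_dist_K stochastic_matrix.harmonic_const[OF K_stochastic K_class] by blast

end

sublocale hat_chain \<subseteq> base: r_vec_setting N K \<mu> p0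
  by (rule r_vec_setting_K[OF p0_dim mu_p0])

context hat_chain
begin

lemma eta_carrier: "\<eta> \<in> carrier_vec N"
  by (rule distribution_carrier[OF eta_distr])

lemma eta_nonneg: "i < N \<Longrightarrow> \<eta> $ i \<ge> 0"
  and eta_sum: "(\<Sum>i<N. \<eta> $ i) = 1"
  using eta_distr unfolding is_distribution_def by auto

lemma gap_carrier: "p1 - p0 \<in> carrier_vec N"
  using p0_dim p1_dim by simp

lemma gap_bounds: "i < N \<Longrightarrow> 0 \<le> (p1 - p0) $ i \<and> (p1 - p0) $ i \<le> 1"
  using p_mono p0_range p1_range p0_dim p1_dim by fastforce

lemma hat_r_vec_setting:
  assumes e: "0 < e" "e \<le> 1"
  shows "r_vec_setting (N+N) (hatK K e) (0\<^sub>v N @\<^sub>v \<mu>) (hatp p1 p0)"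
proof -
  have st: "stationary (hatK K e) (0\<^sub>v N @\<^sub>v \<mu>)" by (rule base.hatK_stationary[OF mu_stat])
  have "(0\<^sub>v N @\<^sub>v \<mu>) \<bullet> hatp p1 p0 = (\<Sum>k<N+N. (0\<^sub>v N @\<^sub>v \<mu>) $ k * hatp p1 p0 $ k)"
    by (rule scalar_prod_lessThan) (use p0_dim p1_dim in \<open>simp add: hatp_def\<close>)
  also have "\<dots> = \<mu> \<bullet> p0"
    unfolding scalar_prod_lessThan[OF p0_dim] sum_lessThan_add hatp_def
    using p0_dim p1_dim base.m_carrier by simp
  finally show ?thesis unfolding r_vec_setting_def r_vec_setting_axioms_def
    using base.hatK_stochastic[of e] e st
      stationary_unique_stat_dist[OF st base.hatK_stationary_unique[OF e(1) mu_unique]]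
      base.hatK_harmonic_const[OF e base.harmonic_vec_const] p0_dim p1_dim mu_p0
    by (simp add: hatp_def)
qed

lemma r_vec_hat:
  assumes e: "0 < e" "e \<le> 1"
  shows "r_vec (hatp p1 p0) (hatK K e)
    = (r_vec p0 K + 2 \<cdot>\<^sub>v base.resolvent (1-e) (p1 - p0)) @\<^sub>v r_vec p0 K"
proof -
  interpret hat: r_vec_setting "N+N" "hatK K e" "0\<^sub>v N @\<^sub>v \<mu>" "hatp p1 p0"
    by (rule hat_r_vec_setting[OF e])
  define r0 where "r0 = r_vec p0 K"
  define T where "T = base.resolvent (1-e) (p1 - p0)"
  define rh where "rh = (r0 + 2 \<cdot>\<^sub>v T) @\<^sub>v r0"
  have r0: "r0 \<in> carrier_vec N" "\<And>i. i < N \<Longrightarrow> r0 $ i - (K *\<^sub>v r0) $ i = 2 * p0 $ i - 1"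
    "base.rank_one_form r0 = 0"
    using base.r_vec_solves unfolding base.r_system_def r0_def by auto
  have T: "T \<in> carrier_vec N" unfolding T_def by simp
  have rh: "rh \<in> carrier_vec (N+N)" unfolding rh_def using r0 T by simp
  have rh_upper: "rh $ i = r0 $ i + 2 * T $ i" and rh_lower: "rh $ (N+i) = r0 $ i" if "i < N" for i
    unfolding rh_def using r0 T that by simp_all
  have K_rh_upper: "(\<Sum>j<N. K $$ (i,j) * rh $ j) = (K *\<^sub>v r0) $ i + 2 * (K *\<^sub>v T) $ i" if i: "i < N" for i
    using i r0(1) T by (simp add: rh_upper base.mult_vec_index algebra_simps sum.distrib sum_distrib_left)
  have K_rh_lower: "(\<Sum>j<N. K $$ (i,j) * rh $ (N+j)) = (K *\<^sub>v r0) $ i" if i: "i < N" for i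
    using i r0(1) by (simp add: rh_lower base.mult_vec_index)
  have hat_lower: "(hatK K e *\<^sub>v rh) $ (N+i) = (K *\<^sub>v r0) $ i" if "i < N" for i
    using base.hatK_mult_vec_lower[OF rh that] K_rh_lower[OF that] by simp
  have "hat.r_system rh"
    unfolding hat.r_system_def
  proof (intro conjI)
    show "rh \<in> carrier_vec (N+N)" by (rule rh)
    show "\<forall>i<N+N. rh $ i - (hatK K e *\<^sub>v rh) $ i = 2 * hatp p1 p0 $ i - 1"
      unfolding all_lessThan_add
    proof (intro conjI allI impI)
      fix i assume i: "i < N"
      have "rh $ i - (hatK K e *\<^sub>v rh) $ i
          = (r0 $ i - (K *\<^sub>v r0) $ i) + 2 * (T $ i - (1-e) * (K *\<^sub>v T) $ i)"
        using base.hatK_mult_vec_upper[OF rh i] K_rh_upper[OF i] K_rh_lower[OF i] rh_upper[OF i]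
        by (simp add: algebra_simps)
      also have "\<dots> = 2 * hatp p1 p0 $ i - 1"
        using r0(2)[OF i] base.resolvent_eq[of "1-e" "p1 - p0" i] e i gap_carrier p0_dim p1_dim
        unfolding T_def by (simp add: hatp_def)
      finally show "rh $ i - (hatK K e *\<^sub>v rh) $ i = 2 * hatp p1 p0 $ i - 1" .
    next
      fix i assume i: "i < N"
      show "rh $ (N+i) - (hatK K e *\<^sub>v rh) $ (N+i) = 2 * hatp p1 p0 $ (N+i) - 1"
        using rh_lower[OF i] hat_lower[OF i] r0(2)[OF i] p0_dim p1_dim i by (simp add: hatp_def)
    qed
    have "hat.rank_one_form rh = base.rank_one_form r0"
      unfolding hat.rank_one_form_def base.rank_one_form_def sum_lessThan_add
      using p0_dim p1_dim base.m_carrier by (simp add: hatp_def hat_lower)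
    thus "hat.rank_one_form rh = 0" using r0(3) by simp
  qed
  thus ?thesis using hat.r_vec_unique unfolding rh_def r0_def T_def by blast
qed

lemma nu_hat:
  assumes e: "0 < e" "e \<le> 1"
  shows "nu (hatp p1 p0) (hatK K e) = nu p0 K"
proof -
  interpret hat: r_vec_setting "N+N" "hatK K e" "0\<^sub>v N @\<^sub>v \<mu>" "hatp p1 p0"
    by (rule hat_r_vec_setting[OF e])
  define rh where "rh = r_vec (hatp p1 p0) (hatK K e)"
  have rh: "rh \<in> carrier_vec (N+N)" unfolding rh_def by (rule hat.r_vec_carrier)
  have "rh $ (N+j) = r_vec p0 K $ j" if "j < N" for j
    unfolding rh_def r_vec_hat[OF e] using that base.r_vec_carrier by (simp add: base.resolvent_def)
  hence "(hatK K e *\<^sub>v rh) $ (N+i) = (K *\<^sub>v r_vec p0 K) $ i" if "i < N" for i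
    using base.hatK_mult_vec_lower[OF rh that] base.mult_vec_index[OF base.r_vec_carrier that] by simp
  thus ?thesis
    unfolding hat.nu_eq_sum base.nu_eq_sum rh_def[symmetric] sum_lessThan_add
    using p0_dim p1_dim base.m_carrier by (simp add: hatp_def)
qed

lemma delta_hat_resolvent:
  assumes e: "0 < e" "e \<le> 1"
  shows "delta (hatp p1 p0) (hatK K e) (hateta \<eta> e)
    = delta p0 K \<eta> + 4 * ((1-e) * (\<eta> \<bullet> base.resolvent (1-e) (p1 - p0))) / nu p0 K"
proof -
  define r0 where "r0 = r_vec p0 K"
  define T where "T = base.resolvent (1-e) (p1 - p0)"
  have r0: "r0 \<in> carrier_vec N" unfolding r0_def by (rule base.r_vec_carrier)
  have T: "T \<in> carrier_vec N" unfolding T_def by simp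
  have "hateta \<eta> e \<bullet> ((r0 + 2 \<cdot>\<^sub>v T) @\<^sub>v r0)
      = (\<Sum>k<N+N. hateta \<eta> e $ k * ((r0 + 2 \<cdot>\<^sub>v T) @\<^sub>v r0) $ k)"
    by (rule scalar_prod_lessThan) (use r0 T in simp)
  also have "\<dots> = (\<Sum>k<N. \<eta> $ k * r0 $ k) + 2 * ((1-e) * (\<Sum>k<N. \<eta> $ k * T $ k))"
    unfolding sum_lessThan_add hateta_def using eta_carrier r0 T
    by (simp add: algebra_simps sum.distrib sum_subtractf sum_distrib_left)
  also have "\<dots> = \<eta> \<bullet> r0 + 2 * ((1-e) * (\<eta> \<bullet> T))"
    using scalar_prod_lessThan[OF r0] scalar_prod_lessThan[OF T] by simp
  finally have "hateta \<eta> e \<bullet> ((r0 + 2 \<cdot>\<^sub>v T) @\<^sub>v r0) = \<eta> \<bullet> r0 + 2 * ((1-e) * (\<eta> \<bullet> T))" .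
  thus ?thesis
    unfolding delta_def r_vec_hat[OF e] nu_hat[OF e] r0_def[symmetric] T_def[symmetric]
    by (simp add: add_divide_distrib)
qed

definition gap_moment :: "nat \<Rightarrow> real" where
  "gap_moment j = \<eta> \<bullet> (K ^\<^sub>m j *\<^sub>v (p1 - p0))"

definition gap_series :: "real \<Rightarrow> real" where
  "gap_series c = (\<Sum>j. gap_moment j * c ^ j)"

lemma gap_moment_bounds: "0 \<le> gap_moment j \<and> gap_moment j \<le> 1"
proof -
  define y where "y = K ^\<^sub>m j *\<^sub>v (p1 - p0)"
  have y: "y \<in> carrier_vec N" "\<And>k. k < N \<Longrightarrow> 0 \<le> y $ k \<and> y $ k \<le> 1"
    unfolding y_def using base.pow_mult_vec_bounds[OF gap_carrier gap_bounds] gap_carrier by auto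
  have "gap_moment j = (\<Sum>k<N. \<eta> $ k * y $ k)"
    unfolding gap_moment_def y_def[symmetric] by (rule scalar_prod_lessThan[OF y(1)])
  moreover have "0 \<le> (\<Sum>k<N. \<eta> $ k * y $ k)"
    using y eta_nonneg by (intro sum_nonneg mult_nonneg_nonneg) simp_all
  moreover have "(\<Sum>k<N. \<eta> $ k * y $ k) \<le> (\<Sum>k<N. \<eta> $ k)"
    using y eta_nonneg by (intro sum_mono) (simp add: mult_left_le)
  ultimately show ?thesis using eta_sum by simp
qed

lemma summable_gap_series:
  assumes c: "0 \<le> c" "c < 1"
  shows "summable (\<lambda>j. gap_moment j * c ^ j)"
proof (rule summable_comparison_test[of _ "\<lambda>j. c ^ j"])
  show "\<exists>N. \<forall>j\<ge>N. norm (gap_moment j * c ^ j) \<le> c ^ j"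
    using gap_moment_bounds c by (intro exI[of _ 0]) (simp add: abs_mult mult_left_le_one_le)
  show "summable (\<lambda>j. c ^ j)" using c by simp
qed

lemma eta_resolvent_gap:
  assumes c: "0 \<le> c" "c < 1"
  shows "\<eta> \<bullet> base.resolvent c (p1 - p0) = gap_series c"
proof -
  have s: "summable (\<lambda>j. c ^ j * (K ^\<^sub>m j *\<^sub>v (p1 - p0)) $ k)" if "k < N" for k
    by (rule base.summable_resolvent[OF c gap_carrier that])
  have "\<eta> \<bullet> base.resolvent c (p1 - p0) = (\<Sum>k<N. \<eta> $ k * (\<Sum>j. c ^ j * (K ^\<^sub>m j *\<^sub>v (p1 - p0)) $ k))"
    unfolding scalar_prod_lessThan[OF base.resolvent_carrier] by (simp add: base.resolvent_def)
  also have "\<dots> = (\<Sum>k<N. \<Sum>j. \<eta> $ k * (c ^ j * (K ^\<^sub>m j *\<^sub>v (p1 - p0)) $ k))"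
    using s by (simp add: suminf_mult)
  also have "\<dots> = (\<Sum>j. \<Sum>k<N. \<eta> $ k * (c ^ j * (K ^\<^sub>m j *\<^sub>v (p1 - p0)) $ k))"
    using s by (intro suminf_sum[symmetric] summable_mult) simp
  also have "\<dots> = gap_series c"
    unfolding gap_series_def
  proof (rule suminf_cong)
    fix j
    show "(\<Sum>k<N. \<eta> $ k * (c ^ j * (K ^\<^sub>m j *\<^sub>v (p1 - p0)) $ k)) = gap_moment j * c ^ j"
      unfolding gap_moment_def scalar_prod_lessThan[OF base.pow_mult_vec_carrier[OF gap_carrier, of j]]
      by (simp add: sum_distrib_left mult_ac)
  qed
  finally show ?thesis .
qed

lemma mu_gap_pos: "0 < \<mu> \<bullet> (p1 - p0)"
  using mu_p1 scalar_prod_minus_distrib[OF base.m_carrier p1_dim p0_dim] by simp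

(* A solution of the Poisson equation is r(q, K) for q = (p1 - p0 - \<mu>\<cdot>(p1 - p0) + 1)/2, the vector
   with \<mu>\<cdot>q = 1/2 and 2q - 1 = p1 - p0 - \<mu>\<cdot>(p1 - p0). *)
lemma poisson_gap:
  obtains g where "g \<in> carrier_vec N" "\<And>i. i < N \<Longrightarrow> g $ i - (K *\<^sub>v g) $ i = (p1 - p0) $ i - \<mu> \<bullet> (p1 - p0)"
proof -
  define a where "a = \<mu> \<bullet> (p1 - p0)"
  define q where "q = vec N (\<lambda>i. ((p1 - p0) $ i - a + 1) / 2)"
  have q: "q \<in> carrier_vec N" unfolding q_def by simp
  have "\<mu> \<bullet> q = (\<Sum>i<N. \<mu> $ i * q $ i)" by (rule scalar_prod_lessThan[OF q])
  also have "\<dots> = (\<Sum>i<N. (\<mu> $ i * (p1 - p0) $ i - a * \<mu> $ i + \<mu> $ i) / 2)"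
    by (rule sum.cong) (simp_all add: q_def field_simps)
  also have "\<dots> = ((\<Sum>i<N. \<mu> $ i * (p1 - p0) $ i) - a * (\<Sum>i<N. \<mu> $ i) + (\<Sum>i<N. \<mu> $ i)) / 2"
    by (simp add: sum.distrib sum_subtractf sum_distrib_left flip: sum_divide_distrib)
  also have "\<dots> = 1/2"
    using base.m_sum scalar_prod_lessThan[OF gap_carrier, of \<mu>] unfolding a_def by simp
  finally have "\<mu> \<bullet> q = 1/2" .
  then interpret Kq: r_vec_setting N K \<mu> q by (rule r_vec_setting_K[OF q])
  show ?thesis
  proof (rule that[of "r_vec q K"])
    show "r_vec q K \<in> carrier_vec N" by (rule Kq.r_vec_carrier)
    show "r_vec q K $ i - (K *\<^sub>v r_vec q K) $ i = (p1 - p0) $ i - \<mu> \<bullet> (p1 - p0)" if i: "i < N" for i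
    proof -
      have "r_vec q K $ i - (K *\<^sub>v r_vec q K) $ i = 2 * q $ i - 1"
        using Kq.r_vec_solves i unfolding Kq.r_system_def by simp
      also have "\<dots> = (p1 - p0) $ i - \<mu> \<bullet> (p1 - p0)" using i unfolding q_def a_def by (simp add: diff_divide_distrib add_divide_distrib)
      finally show ?thesis .
    qed
  qed
qed

lemma resolvent_gap_lower:
  obtains G where "\<And>c i. 0 \<le> c \<Longrightarrow> c < 1 \<Longrightarrow> i < N \<Longrightarrow>
    \<mu> \<bullet> (p1 - p0) / (1 - c) - G \<le> base.resolvent c (p1 - p0) $ i"
proof -
  obtain g where g: "g \<in> carrier_vec N"
    and poisson: "\<And>i. i < N \<Longrightarrow> g $ i - (K *\<^sub>v g) $ i = (p1 - p0) $ i - \<mu> \<bullet> (p1 - p0)"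
    using poisson_gap by blast
  define G where "G = (\<Sum>k<N. \<bar>g $ k\<bar>)"
  have g_le: "\<bar>g $ k\<bar> \<le> G" if "k < N" for k unfolding G_def by (rule member_le_sum) (use that in auto)
  have Kg_le: "\<bar>(K *\<^sub>v g) $ i\<bar> \<le> G" if "i < N" for i by (rule base.mult_vec_abs_le[OF g g_le that])
  have "\<mu> \<bullet> (p1 - p0) / (1 - c) - 2 * G \<le> base.resolvent c (p1 - p0) $ i"
    if c: "0 \<le> c" "c < 1" and i: "i < N" for c i
  proof -
    define T where "T = base.resolvent c (p1 - p0)"
    have T: "T \<in> carrier_vec N" unfolding T_def by simp
    have Z: "T - g \<in> carrier_vec N" using T g by simp
    have "\<mu> \<bullet> (p1 - p0) - (1 - c) * G \<le> (T - g) $ k - c * (K *\<^sub>v (T - g)) $ k" if k: "k < N" for k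
    proof -
      have "(T - g) $ k - c * (K *\<^sub>v (T - g)) $ k
          = (T $ k - c * (K *\<^sub>v T) $ k) - (g $ k - (K *\<^sub>v g) $ k) - (1 - c) * (K *\<^sub>v g) $ k"
        unfolding base.mult_vec_diff[OF T g k] using T g k by (simp add: algebra_simps)
      also have "\<dots> = \<mu> \<bullet> (p1 - p0) - (1 - c) * (K *\<^sub>v g) $ k"
        using base.resolvent_eq[OF c gap_carrier k] poisson[OF k] unfolding T_def by simp
      moreover have "(1 - c) * (K *\<^sub>v g) $ k \<le> (1 - c) * G"
        using Kg_le[OF k] c by (intro mult_left_mono) auto
      ultimately show ?thesis by linarith
    qed
    from base.resolvent_min_principle[OF Z c this i]
    have "(\<mu> \<bullet> (p1 - p0) - (1 - c) * G) / (1 - c) \<le> T $ i - g $ i" using T g i by simp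
    moreover have "(\<mu> \<bullet> (p1 - p0) - (1 - c) * G) / (1 - c) = \<mu> \<bullet> (p1 - p0) / (1 - c) - G"
      using c by (simp add: field_simps)
    ultimately show ?thesis using g_le[OF i] unfolding T_def by linarith
  qed
  thus ?thesis by (rule that)
qed

lemma gap_series_lower:
  obtains G where "\<And>c. 0 \<le> c \<Longrightarrow> c < 1 \<Longrightarrow> \<mu> \<bullet> (p1 - p0) / (1 - c) - G \<le> gap_series c"
proof -
  obtain G where G: "\<And>c i. 0 \<le> c \<Longrightarrow> c < 1 \<Longrightarrow> i < N \<Longrightarrow>
      \<mu> \<bullet> (p1 - p0) / (1 - c) - G \<le> base.resolvent c (p1 - p0) $ i"
    using resolvent_gap_lower by blast
  have "\<mu> \<bullet> (p1 - p0) / (1 - c) - G \<le> gap_series c" if c: "0 \<le> c" "c < 1" for c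
  proof -
    have "\<mu> \<bullet> (p1 - p0) / (1 - c) - G = (\<Sum>k<N. \<eta> $ k * (\<mu> \<bullet> (p1 - p0) / (1 - c) - G))"
      using eta_sum by (simp flip: sum_distrib_right)
    also have "\<dots> \<le> (\<Sum>k<N. \<eta> $ k * base.resolvent c (p1 - p0) $ k)"
      using G[OF c] eta_nonneg by (intro sum_mono mult_left_mono) simp_all
    also have "\<dots> = gap_series c"
      using eta_resolvent_gap[OF c] scalar_prod_lessThan[OF base.resolvent_carrier] by simp
    finally show ?thesis .
  qed
  thus ?thesis by (rule that)
qed

(* Otherwise gap_series would vanish identically, contradicting its blow-up at 1. *)
lemma gap_moment_pos: "\<exists>j. 0 < gap_moment j"
proof (rule ccontr)
  assume "\<not> (\<exists>j. 0 < gap_moment j)"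
  hence "gap_moment j = 0" for j using gap_moment_bounds[of j] by (meson not_less order.antisym)
  hence zero: "gap_series c = 0" for c unfolding gap_series_def by simp
  obtain G where G: "\<And>c. 0 \<le> c \<Longrightarrow> c < 1 \<Longrightarrow> \<mu> \<bullet> (p1 - p0) / (1 - c) - G \<le> gap_series c"
    using gap_series_lower by blast
  define a where "a = \<mu> \<bullet> (p1 - p0)"
  define e where "e = a / (2 * (\<bar>G\<bar> + a))"
  have a: "0 < a" unfolding a_def by (rule mu_gap_pos)
  have e: "0 < e" "e < 1" unfolding e_def using a by (simp_all add: divide_less_eq add_pos_nonneg)
  have "a / e = 2 * (\<bar>G\<bar> + a)" unfolding e_def using a by simp
  hence "0 < a / (1 - (1 - e)) - G" using a by simp
  also have "\<dots> \<le> 0" using G[of "1 - e"] e zero unfolding a_def by simp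
  finally show False by simp
qed

lemma gap_series_strict_mono:
  assumes c: "0 \<le> c1" "c1 < c2" "c2 < 1"
  shows "c1 * gap_series c1 < c2 * gap_series c2"
proof -
  obtain j0 where j0: "0 < gap_moment j0" using gap_moment_pos by blast
  have shift: "summable (\<lambda>j. gap_moment j * c ^ Suc j)"
    "c * gap_series c = (\<Sum>j. gap_moment j * c ^ Suc j)" if "0 \<le> c" "c < 1" for c
    using summable_mult[OF summable_gap_series[OF that], of c] suminf_mult[OF summable_gap_series[OF that], of c]
    unfolding gap_series_def by (simp_all add: mult_ac)
  have "0 < (\<Sum>j. gap_moment j * c2 ^ Suc j - gap_moment j * c1 ^ Suc j)"
  proof (rule suminf_pos2)
    show "summable (\<lambda>j. gap_moment j * c2 ^ Suc j - gap_moment j * c1 ^ Suc j)"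
      using shift(1)[of c1] shift(1)[of c2] c by (intro summable_diff) simp_all
    show "0 \<le> gap_moment j * c2 ^ Suc j - gap_moment j * c1 ^ Suc j" for j
      using gap_moment_bounds[of j] power_mono[of c1 c2 "Suc j"] c by (simp add: mult_left_mono)
    show "0 < gap_moment j0 * c2 ^ Suc j0 - gap_moment j0 * c1 ^ Suc j0"
      using j0 power_strict_mono[of c1 c2 "Suc j0"] c by simp
  qed
  also have "\<dots> = c2 * gap_series c2 - c1 * gap_series c1"
    using suminf_diff[OF shift(1)[of c2] shift(1)[of c1]] shift(2)[of c1] shift(2)[of c2] c by simp
  finally show ?thesis by simp
qed

lemma isCont_gap_series:
  assumes "0 \<le> c" "c < 1"
  shows "isCont gap_series c"
proof -
  have "summable (\<lambda>j. gap_moment j * ((1 + c) / 2) ^ j)" using summable_gap_series assms by simp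
  moreover have "norm c < norm ((1 + c) / 2)" using assms by simp
  ultimately show ?thesis unfolding gap_series_def[abs_def] by (rule isCont_powser)
qed

abbreviation delta_hat :: "real \<Rightarrow> real" where
  "delta_hat \<epsilon> \<equiv> delta (hatp p1 p0) (hatK K \<epsilon>) (hateta \<eta> \<epsilon>)"

lemma delta_hat_series:
  assumes "0 < e" "e \<le> 1"
  shows "delta_hat e = delta p0 K \<eta> + 4 * ((1-e) * gap_series (1-e)) / nu p0 K"
  using delta_hat_resolvent[OF assms] eta_resolvent_gap[of "1-e"] assms by simp

lemma delta_hat_formula:
  assumes e: "0 < e" "e \<le> 1"
  shows "delta_hat e = delta p0 K \<eta> +
    4 * (\<eta> \<bullet> vec N (\<lambda>i. \<Sum>j. (1 - e) ^ (Suc j) * ((K ^\<^sub>m j) *\<^sub>v (p1 - p0)) $ i)) / nu p0 K"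
proof -
  have "vec N (\<lambda>i. \<Sum>j. (1 - e) ^ (Suc j) * ((K ^\<^sub>m j) *\<^sub>v (p1 - p0)) $ i)
      = (1 - e) \<cdot>\<^sub>v base.resolvent (1 - e) (p1 - p0)"
  proof (rule eq_vecI)
    fix i assume "i < dim_vec ((1 - e) \<cdot>\<^sub>v base.resolvent (1 - e) (p1 - p0))"
    hence i: "i < N" by (simp add: base.resolvent_def)
    show "vec N (\<lambda>i. \<Sum>j. (1 - e) ^ (Suc j) * ((K ^\<^sub>m j) *\<^sub>v (p1 - p0)) $ i) $ i
        = ((1 - e) \<cdot>\<^sub>v base.resolvent (1 - e) (p1 - p0)) $ i"
      using suminf_mult[OF base.summable_resolvent[of "1-e", OF _ _ gap_carrier i], of "1-e"] e i
      by (simp add: base.resolvent_def mult.assoc)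
  qed (simp add: base.resolvent_def)
  moreover have "\<eta> \<bullet> ((1 - e) \<cdot>\<^sub>v base.resolvent (1 - e) (p1 - p0)) = (1 - e) * gap_series (1 - e)"
    using eta_resolvent_gap[of "1-e"] e eta_carrier by (simp add: base.resolvent_def)
  ultimately show ?thesis using delta_hat_series[OF e] by simp
qed

lemma delta_hat_one: "delta_hat 1 = delta p0 K \<eta>"
  using delta_hat_series[of 1] by simp

lemma delta_hat_continuous: "continuous_on {0<..1} delta_hat"
proof -
  have "continuous_on {0<..1} (\<lambda>e. delta p0 K \<eta> + 4 * ((1-e) * gap_series (1-e)) / nu p0 K)"
  proof (rule continuous_at_imp_continuous_on, rule ballI)
    fix e :: real assume "e \<in> {0<..1}"
    hence "isCont gap_series (1 - e)" by (intro isCont_gap_series) auto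
    hence "isCont (\<lambda>e. gap_series (1 - e)) e" by (rule isCont_o2[rotated]) (intro continuous_intros)
    thus "isCont (\<lambda>e. delta p0 K \<eta> + 4 * ((1-e) * gap_series (1-e)) / nu p0 K) e"
      using base.nu_pos[OF p0_range] by (auto intro!: continuous_intros)
  qed
  thus ?thesis by (rule continuous_on_cong[THEN iffD1, OF refl, rotated]) (simp add: delta_hat_series)
qed

lemma delta_hat_strict_decreasing:
  assumes "0 < a" "a < b" "b \<le> 1"
  shows "delta_hat b < delta_hat a"
proof -
  have "(1-b) * gap_series (1-b) < (1-a) * gap_series (1-a)"
    using assms by (intro gap_series_strict_mono) auto
  thus ?thesis using assms delta_hat_series[of a] delta_hat_series[of b] base.nu_pos[OF p0_range]
    by (simp add: divide_strict_right_mono)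
qed

lemma delta_hat_tendsto_top: "filterlim delta_hat at_top (at_right 0)"
proof -
  obtain G where G: "\<And>c. 0 \<le> c \<Longrightarrow> c < 1 \<Longrightarrow> \<mu> \<bullet> (p1 - p0) / (1 - c) - G \<le> gap_series c"
    using gap_series_lower by blast
  define a where "a = \<mu> \<bullet> (p1 - p0)"
  define n0 where "n0 = nu p0 K"
  define d0 where "d0 = delta p0 K \<eta>"
  have a: "0 < a" unfolding a_def by (rule mu_gap_pos)
  have n0: "0 < n0" unfolding n0_def by (rule base.nu_pos[OF p0_range])
  define L where "L e = (d0 + 4 * (e * G - a - G) / n0) + (4 * a / n0) * inverse e" for e
  have "filterlim L at_top (at_right 0)"
    unfolding L_def[abs_def]
  proof (rule filterlim_tendsto_add_at_top)
    show "((\<lambda>e. d0 + 4 * (e * G - a - G) / n0) \<longlongrightarrow> d0 + 4 * (0 * G - a - G) / n0) (at_right 0)"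
      by (intro tendsto_intros) (use n0 in auto)
    show "filterlim (\<lambda>e. (4 * a / n0) * inverse e) at_top (at_right (0::real))"
      using a n0 by (intro filterlim_tendsto_pos_mult_at_top[OF tendsto_const _ filterlim_inverse_at_top_right]) simp
  qed
  moreover have "eventually (\<lambda>e. e \<in> {0<..<1}) (at_right (0::real))"
    by (rule eventually_at_right_real) simp
  hence "eventually (\<lambda>e. L e \<le> delta_hat e) (at_right 0)"
  proof (rule eventually_mono)
    fix e :: real assume "e \<in> {0<..<1}"
    hence e: "0 < e" "e < 1" by auto
    have "(1-e) * (a/e - G) \<le> (1-e) * gap_series (1-e)"
      using G[of "1-e"] e unfolding a_def by (intro mult_left_mono) auto
    moreover have "L e = d0 + 4 * ((1-e) * (a/e - G)) / n0"
      unfolding L_def using e n0 by (simp add: field_simps)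
    ultimately show "L e \<le> delta_hat e"
      using delta_hat_series[of e] e n0 unfolding d0_def n0_def by (simp add: divide_right_mono)
  qed
  ultimately show ?thesis by (rule filterlim_at_top_mono)
qed

end

theorem lemma5p1:
  fixes N :: nat and K :: "real mat" and \<mu> \<eta> p0 p1 :: "real vec"
  assumes K_carrier: "K \<in> carrier_mat N N"
    and K_stoch: "stochastic_mat K"
    and K_class: "\<exists>!C. closed_irreducible K C"
    and mu_stat: "stationary K \<mu>"
    and mu_unique: "\<And>m. stationary K m \<Longrightarrow> m = \<mu>"
    and p0_dim: "p0 \<in> carrier_vec N" and p1_dim: "p1 \<in> carrier_vec N"
    and p0_range: "\<And>i. i < N \<Longrightarrow> 0 < p0 $ i \<and> p0 $ i < 1"
    and p1_range: "\<And>i. i < N \<Longrightarrow> 0 < p1 $ i \<and> p1 $ i < 1"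
    and p_mono: "\<And>i. i < N \<Longrightarrow> p1 $ i \<ge> p0 $ i"
    and mu_p0: "\<mu> \<bullet> p0 = 1/2"
    and mu_p1: "\<mu> \<bullet> p1 > \<mu> \<bullet> p0"
    and eta_distr: "is_distribution N \<eta>"
  shows "(\<forall>\<epsilon>\<in>{0<..1}.
            delta (hatp p1 p0) (hatK K \<epsilon>) (hateta \<eta> \<epsilon>) =
              delta p0 K \<eta> +
              4 * (\<eta> \<bullet> vec N (\<lambda>i. \<Sum>j. (1 - \<epsilon>) ^ (Suc j) * ((K ^\<^sub>m j) *\<^sub>v (p1 - p0)) $ i))
                / nu p0 K)
      \<and> continuous_on {0<..1} (\<lambda>\<epsilon>. delta (hatp p1 p0) (hatK K \<epsilon>) (hateta \<eta> \<epsilon>))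
      \<and> (\<forall>a b. 0 < a \<and> a < b \<and> b \<le> 1 \<longrightarrow>
            delta (hatp p1 p0) (hatK K b) (hateta \<eta> b) < delta (hatp p1 p0) (hatK K a) (hateta \<eta> a))
      \<and> delta (hatp p1 p0) (hatK K 1) (hateta \<eta> 1) = delta p0 K \<eta>
      \<and> filterlim (\<lambda>\<epsilon>. delta (hatp p1 p0) (hatK K \<epsilon>) (hateta \<eta> \<epsilon>)) at_top (at_right 0)"
proof -
  interpret hat_chain N K \<mu> \<eta> p0 p1
    by (unfold_locales; fact assms)
  show ?thesis
    using delta_hat_formula delta_hat_continuous delta_hat_strict_decreasing delta_hat_one
      delta_hat_tendsto_top
    by auto
qed

end
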